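(* Let $\Lambda=\mathrm{diag}(\lambda_1,\dots,\lambda_n)$ with $\lambda_1<\dots<\lambda_n$ and let $f:\mathbb{R}\to\mathbb{R}$ satisfy $f(\lambda_i)\neq 0$ for all $i$ and $|f(\lambda_i)|\neq|f(\lambda_j)|$ for $i\neq j$. Let $F:\mathcal{T}_\Lambda\to\mathcal{T}_\Lambda$ be the QR step induced by $f$. Let $\mathcal{K}\subset\mathcal{T}_\Lambda$ be a compact set containing no diagonal matrices. Then there exists $K>0$ such that for all $T\in\mathcal{T}_\Lambda$, $$\#\{k\in\mathbb{N} : F^k(T)\in\mathcal{K}\}<K.$$
   Context: $\mathcal{T}_\Lambda$ denotes the set of real symmetric tridiagonal $n\times n$ matrices with spectrum $\{\lambda_1,\dots,\lambda_n\}$. For an invertible real matrix $A$, write uniquely $A=\mathbf{Q}(A)\mathbf{R}(A)$ with $\mathbf{Q}(A)$ orthogonal and $\mathbf{R}(A)$ upper triangular with positive diagonal. The QR step induced by $f$ is $F(T)=\mathbf{Q}(f(T))^{*}\,T\,\mathbf{Q}(f(T))$, where $f(T)$ is defined by functional calculus. *)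

theory Defs
  imports "HOL-Analysis.Analysis"
begin

text \<open>Square real matrices indexed by a finite linearly ordered type 'n
  (playing the role of the index set {1..n} with its usual order).\<close>

definition real_eigenvalues :: "real^'n^'n \<Rightarrow> real set" where
  "real_eigenvalues A = {\<mu>. \<exists>v. v \<noteq> 0 \<and> A *v v = \<mu> *s v}"

definition is_diag_mat :: "real^'n^'n \<Rightarrow> bool" where
  "is_diag_mat A \<longleftrightarrow> (\<forall>i j. i \<noteq> j \<longrightarrow> A $ i $ j = 0)"

definition adjacent_idx :: "'n::linorder \<Rightarrow> 'n \<Rightarrow> bool" where
  "adjacent_idx i j \<longleftrightarrow>
     (i < j \<and> \<not> (\<exists>k. i < k \<and> k < j)) \<or> (j < i \<and> \<not> (\<exists>k. j < k \<and> k < i))"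

definition tridiagonal :: "real^('n::{finite,linorder})^('n::{finite,linorder}) \<Rightarrow> bool" where
  "tridiagonal A \<longleftrightarrow> (\<forall>i j. i \<noteq> j \<and> \<not> adjacent_idx i j \<longrightarrow> A $ i $ j = 0)"

definition T_Lambda :: "('n::{finite,linorder} \<Rightarrow> real) \<Rightarrow> (real^('n::{finite,linorder})^('n::{finite,linorder})) set" where
  "T_Lambda lam = {T. transpose T = T \<and> tridiagonal T \<and> real_eigenvalues T = range lam}"

definition upper_triangular :: "real^('n::{finite,linorder})^('n::{finite,linorder}) \<Rightarrow> bool" where
  "upper_triangular R \<longleftrightarrow> (\<forall>i j. j < i \<longrightarrow> R $ i $ j = 0)"

definition qr_Q :: "real^('n::{finite,linorder})^('n::{finite,linorder}) \<Rightarrow> real^('n::{finite,linorder})^('n::{finite,linorder})" where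
  "qr_Q A = (THE Q. \<exists>R. orthogonal_matrix Q \<and> upper_triangular R \<and>
                        (\<forall>i. R $ i $ i > 0) \<and> A = Q ** R)"

definition mat_fun :: "(real \<Rightarrow> real) \<Rightarrow> real^'n^'n \<Rightarrow> real^'n^'n" where
  "mat_fun f T =
    (let Q = (SOME Q. orthogonal_matrix Q \<and> is_diag_mat (transpose Q ** T ** Q));
         D = transpose Q ** T ** Q
     in Q ** (\<chi> i j. if i = j then f (D $ i $ i) else 0) ** transpose Q)"

definition qr_step :: "(real \<Rightarrow> real) \<Rightarrow> real^('n::{finite,linorder})^('n::{finite,linorder}) \<Rightarrow> real^('n::{finite,linorder})^('n::{finite,linorder})" where
  "qr_step f T = (let Q = qr_Q (mat_fun f T) in transpose Q ** T ** Q)"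

end

theory Submission
  imports Defs "HOL-Computational_Algebra.Polynomial"
begin

(* Let p interpolate f on the spectrum, so that f(T) = p(T) on the isospectral set. If
   p(T) = Q R then F(T) = Q^T T Q and p(F(T)) = R Q, so the Gram matrices of p(T) and p(F(T))
   are R^T R and R R^T. Weighting the diagonal entry k by the number of indices above k, the
   passage from R^T R to R R^T gains at least the squared norm of the strictly upper part of R,
   and that norm controls the off-diagonal entries of R^T R. The weighted diagonal is bounded on
   the isospectral set. On the compact set K the off-diagonal part of the Gram matrix of p(T) is
   bounded away from zero: as the values f(lambda_i)^2 are distinct, T is a polynomial in that
   Gram matrix, hence diagonal whenever it is. So each visit to K raises a bounded quantity by a
   fixed amount. *)

section \<open>Diagonal matrices and matrix polynomials\<close>

definition diag_mat :: "('n::finite \<Rightarrow> real) \<Rightarrow> real^'n^'n" where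
  "diag_mat d = (\<chi> i j. if i = j then d i else 0)"

lemma matrix_mult_diag_mat_nth: "(A ** diag_mat d) $ i $ j = A $ i $ j * d j"
proof -
  have "(\<Sum>k\<in>UNIV. A $ i $ k * diag_mat d $ k $ j) = (\<Sum>k\<in>UNIV. if k = j then A $ i $ j * d j else 0)"
    by (intro sum.cong) (auto simp: diag_mat_def)
  then show ?thesis by (simp add: matrix_matrix_mult_def)
qed

lemma diag_mat_mult_diag_mat: "diag_mat a ** diag_mat b = diag_mat (\<lambda>i. a i * b i)"
  by (simp add: vec_eq_iff matrix_mult_diag_mat_nth) (simp add: diag_mat_def)

lemma diag_mat_one: "diag_mat (\<lambda>i. 1) = mat 1"
  by (simp add: diag_mat_def mat_def)

lemma transpose_diag_mat: "transpose (diag_mat d) = diag_mat d"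
  by (simp add: diag_mat_def transpose_def vec_eq_iff)

lemma is_diag_mat_diag_mat: "is_diag_mat (diag_mat d)"
  by (simp add: is_diag_mat_def diag_mat_def)

lemma is_diag_mat_eq_diag_mat: "is_diag_mat D \<Longrightarrow> D = diag_mat (\<lambda>i. D $ i $ i)"
  by (auto simp: is_diag_mat_def diag_mat_def vec_eq_iff)

lemma orthogonal_conj_diag_mat_nth:
  "(Q ** diag_mat d ** transpose Q) $ k $ l = (\<Sum>j\<in>UNIV. Q $ k $ j * d j * Q $ l $ j)"
  by (simp add: matrix_matrix_mult_def[of "Q ** diag_mat d"] matrix_mult_diag_mat_nth transpose_def)

lemma orthogonal_matrix_mult_cancel:
  assumes "orthogonal_matrix Q"
  shows "A ** Q ** transpose Q = A" "A ** transpose Q ** Q = A"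
  using assms by (simp_all add: orthogonal_matrix_def flip: matrix_mul_assoc)

lemma orthogonal_conj_mult:
  assumes "orthogonal_matrix Q"
  shows "(Q ** A ** transpose Q) ** (Q ** B ** transpose Q) = Q ** (A ** B) ** transpose Q"
proof -
  have "(Q ** A ** transpose Q) ** (Q ** B ** transpose Q)
      = Q ** A ** (transpose Q ** Q) ** B ** transpose Q"
    by (simp add: matrix_mul_assoc)
  also have "\<dots> = Q ** (A ** B) ** transpose Q"
    using assms by (simp add: orthogonal_matrix_def matrix_mul_assoc)
  finally show ?thesis .
qed

lemma matrix_mult_sum_left: "A ** sum f I = (\<Sum>x\<in>I. A ** f x)"
  by (simp add: matrix_matrix_mult_def vec_eq_iff sum_distrib_left sum_component
      sum.swap[of _ UNIV I])

lemma matrix_mult_sum_right: "sum f I ** A = (\<Sum>x\<in>I. f x ** A)"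
  by (simp add: matrix_matrix_mult_def vec_eq_iff sum_distrib_right sum_component
      sum.swap[of _ UNIV I])

lemma sum_scaleR_diag_mat: "(\<Sum>k\<in>I. c k *\<^sub>R diag_mat (d k)) = diag_mat (\<lambda>i. \<Sum>k\<in>I. c k * d k i)"
  by (simp add: diag_mat_def vec_eq_iff sum_component)

definition gram :: "real^'n^'m \<Rightarrow> real^'n^'n" where
  "gram A = transpose A ** A"

lemma gram_orthogonal_conj_diag_mat:
  assumes "orthogonal_matrix Q"
  shows "gram (Q ** diag_mat d ** transpose Q) = Q ** diag_mat (\<lambda>i. d i ^ 2) ** transpose Q"
proof -
  have "transpose (Q ** diag_mat d ** transpose Q) = Q ** diag_mat d ** transpose Q"
    by (simp add: matrix_transpose_mul transpose_diag_mat matrix_mul_assoc)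
  then show ?thesis
    unfolding gram_def
    by (simp add: orthogonal_conj_mult[OF assms] diag_mat_mult_diag_mat power2_eq_square)
qed

fun matpow :: "real^'n::finite^'n \<Rightarrow> nat \<Rightarrow> real^'n^'n" where
  "matpow A 0 = mat 1"
| "matpow A (Suc k) = A ** matpow A k"

definition poly_mat :: "real poly \<Rightarrow> real^'n::finite^'n \<Rightarrow> real^'n^'n" where
  "poly_mat p A = (\<Sum>k\<le>degree p. coeff p k *\<^sub>R matpow A k)"

lemma matpow_orthogonal_conj:
  assumes "orthogonal_matrix Q"
  shows "matpow (Q ** A ** transpose Q) k = Q ** matpow A k ** transpose Q"
proof (induction k)
  case 0
  then show ?case using assms by (simp add: orthogonal_matrix_def)
next
  case (Suc k)
  then show ?case using orthogonal_conj_mult[OF assms] by simp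
qed

lemma poly_mat_orthogonal_conj:
  assumes "orthogonal_matrix Q"
  shows "poly_mat p (Q ** A ** transpose Q) = Q ** poly_mat p A ** transpose Q"
  by (simp add: poly_mat_def matpow_orthogonal_conj[OF assms] matrix_mult_sum_left
      matrix_mult_sum_right matrix_scalar_ac scalar_matrix_assoc)

lemma poly_mat_diag_mat: "poly_mat p (diag_mat d) = diag_mat (\<lambda>i. poly p (d i))"
proof -
  have pow: "matpow (diag_mat d) k = diag_mat (\<lambda>i. d i ^ k)" for k
    by (induction k) (simp_all add: diag_mat_one[symmetric] diag_mat_mult_diag_mat)
  show ?thesis
    by (simp add: poly_mat_def pow poly_altdef sum_scaleR_diag_mat)
qed

lemma poly_mat_is_diag_mat:
  assumes "is_diag_mat D"
  shows "poly_mat p D = diag_mat (\<lambda>i. poly p (D $ i $ i))"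
proof -
  have "poly_mat p D = poly_mat p (diag_mat (\<lambda>i. D $ i $ i))"
    using is_diag_mat_eq_diag_mat[OF assms] by (rule arg_cong)
  then show ?thesis by (simp add: poly_mat_diag_mat)
qed

lemma transpose_poly_mat: "transpose (poly_mat p A) = poly_mat p (transpose A)"
proof -
  have "A ** matpow A k = matpow A k ** A" for k
    by (induction k) (simp_all add: matrix_mul_assoc)
  then have "transpose (matpow A k) = matpow (transpose A) k" for k
    by (induction k) (simp_all add: matrix_transpose_mul)
  moreover have "transpose (sum g I) = (\<Sum>k\<in>I. transpose (g k))" for g :: "nat \<Rightarrow> real^'a^'a" and I
    by (simp add: transpose_def vec_eq_iff sum_component)
  ultimately show ?thesis by (simp add: poly_mat_def transpose_scalar)
qed

lemma continuous_on_matrix_mult [continuous_intros]: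
  fixes f g :: "'a::topological_space \<Rightarrow> real^'n::finite^'n"
  assumes "continuous_on S f" "continuous_on S g"
  shows "continuous_on S (\<lambda>x. f x ** g x)"
  unfolding matrix_matrix_mult_def by (intro continuous_intros assms)

lemma continuous_on_transpose [continuous_intros]:
  fixes f :: "'a::topological_space \<Rightarrow> real^'n::finite^'n"
  assumes "continuous_on S f"
  shows "continuous_on S (\<lambda>x. transpose (f x))"
  unfolding transpose_def by (intro continuous_intros assms)

lemma continuous_on_poly_mat [continuous_intros]:
  fixes f :: "'a::topological_space \<Rightarrow> real^'n::finite^'n"
  assumes "continuous_on S f"
  shows "continuous_on S (\<lambda>x. poly_mat p (f x))"
proof -
  have "continuous_on S (\<lambda>x. matpow (f x) k)" for k
    by (induction k) (auto intro!: continuous_intros assms)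
  then show ?thesis unfolding poly_mat_def by (intro continuous_intros)
qed

section \<open>The isospectral set\<close>

definition isospectral :: "('n::finite \<Rightarrow> real) \<Rightarrow> (real^'n^'n) set" where
  "isospectral lam = {S. transpose S = S \<and> real_eigenvalues S = range lam}"

lemma symmetric_eigenvectors_orthogonal:
  fixes S :: "real^'n::finite^'n"
  assumes "transpose S = S" "S *v u = a *s u" "S *v v = b *s v" "a \<noteq> b"
  shows "u \<bullet> v = 0"
proof -
  have "a * (u \<bullet> v) = (u v* S) \<bullet> v"
    using assms(1,2) vector_transpose_matrix[of u S] by (simp add: scalar_mult_eq_scaleR)
  also have "\<dots> = b * (u \<bullet> v)"
    using assms(3) by (simp add: dot_lmul_matrix scalar_mult_eq_scaleR)
  finally show ?thesis using assms(4) by simp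
qed

text \<open>No spectral theorem is needed: the n distinct eigenvalues provide n orthogonal
  eigenvectors.\<close>

lemma isospectral_diagonalise:
  fixes S :: "real^'n::finite^'n"
  assumes S: "S \<in> isospectral lam" and inj: "inj lam"
  obtains Q where "orthogonal_matrix Q" "S = Q ** diag_mat lam ** transpose Q"
proof -
  have "\<forall>i. \<exists>v. v \<noteq> 0 \<and> S *v v = lam i *s v"
    using S unfolding isospectral_def real_eigenvalues_def by blast
  then obtain v where v: "\<And>i. v i \<noteq> 0" "\<And>i. S *v v i = lam i *s v i" by metis
  define u where "u i = (1 / norm (v i)) *\<^sub>R v i" for i
  have Su: "S *v u i = lam i *s u i" for i
    using v(2)[of i] by (simp add: u_def matrix_vector_mult_scaleR scalar_mult_eq_scaleR)
  have orth: "orthogonal (u i) (u j)" if "i \<noteq> j" for i j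
    unfolding orthogonal_def
    by (rule symmetric_eigenvectors_orthogonal[OF _ Su Su])
      (use S inj that in \<open>auto simp: isospectral_def dest: injD\<close>)
  define Q where "Q = (\<chi> k i. u i $ k)"
  have colQ: "column i Q = u i" for i by (simp add: Q_def column_def vec_eq_iff)
  have oQ: "orthogonal_matrix Q"
    unfolding orthogonal_matrix_orthonormal_columns colQ using v(1) orth by (simp add: u_def)
  have "(S ** Q) $ k $ i = (Q ** diag_mat lam) $ k $ i" for k i
  proof -
    have "(S ** Q) $ k $ i = (S *v u i) $ k"
      by (simp add: matrix_matrix_mult_def matrix_vector_mult_def Q_def)
    then show ?thesis by (simp add: Su matrix_mult_diag_mat_nth Q_def)
  qed
  then have "S ** Q = Q ** diag_mat lam" by (simp add: vec_eq_iff)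
  then have "S ** Q ** transpose Q = Q ** diag_mat lam ** transpose Q" by simp
  then have "S = Q ** diag_mat lam ** transpose Q"
    by (simp add: orthogonal_matrix_mult_cancel[OF oQ])
  with oQ that show ?thesis by blast
qed

lemma real_eigenvalues_orthogonal_conj_subset:
  fixes S :: "real^'n::finite^'n"
  assumes Q: "orthogonal_matrix Q"
  shows "real_eigenvalues (transpose Q ** S ** Q) \<subseteq> real_eigenvalues S"
proof
  fix \<mu> assume "\<mu> \<in> real_eigenvalues (transpose Q ** S ** Q)"
  then obtain v where v: "v \<noteq> 0" "(transpose Q ** S ** Q) *v v = \<mu> *s v"
    unfolding real_eigenvalues_def by blast
  have "S *v (Q *v v) = Q *v ((transpose Q ** S ** Q) *v v)"
    using Q by (simp add: matrix_vector_mul_assoc matrix_mul_assoc orthogonal_matrix_def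
        del: transpose_matrix_vector)
  then have "S *v (Q *v v) = \<mu> *s (Q *v v)" by (simp add: v(2) vector_scalar_commute)
  moreover have "transpose Q *v (Q *v v) = v"
    using Q by (simp add: matrix_vector_mul_assoc orthogonal_matrix del: transpose_matrix_vector)
  then have "Q *v v \<noteq> 0" using v(1) by auto
  ultimately show "\<mu> \<in> real_eigenvalues S" unfolding real_eigenvalues_def by blast
qed

lemma real_eigenvalues_orthogonal_conj:
  fixes S :: "real^'n::finite^'n"
  assumes Q: "orthogonal_matrix Q"
  shows "real_eigenvalues (transpose Q ** S ** Q) = real_eigenvalues S"
proof -
  have "transpose (transpose Q) ** (transpose Q ** S ** Q) ** transpose Q = S"
    using Q by (simp add: matrix_mul_assoc orthogonal_matrix_def orthogonal_matrix_mult_cancel)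
  then show ?thesis
    using real_eigenvalues_orthogonal_conj_subset[of Q S]
      real_eigenvalues_orthogonal_conj_subset[of "transpose Q" "transpose Q ** S ** Q"] Q
    by auto
qed

lemma isospectral_orthogonal_conj:
  assumes "S \<in> isospectral lam" "orthogonal_matrix Q"
  shows "transpose Q ** S ** Q \<in> isospectral lam"
  using assms real_eigenvalues_orthogonal_conj[OF assms(2)]
  by (simp add: isospectral_def matrix_transpose_mul matrix_mul_assoc)

lemma diag_entry_in_real_eigenvalues:
  assumes "is_diag_mat D"
  shows "D $ j $ j \<in> real_eigenvalues D"
proof -
  have "D *v axis j 1 = D $ j $ j *s axis j 1"
    using assms unfolding is_diag_mat_def
    by (auto simp: vec_eq_iff matrix_vector_mult_def axis_def if_distrib if_distribR cong: if_cong)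
  moreover have "axis j (1::real) \<noteq> 0" by (simp add: axis_eq_0_iff)
  ultimately show ?thesis unfolding real_eigenvalues_def by blast
qed

lemma lagrange_interpolation_exists:
  fixes x :: "'n::finite \<Rightarrow> real"
  assumes "inj x"
  shows "\<exists>p. \<forall>i. poly p (x i) = y i"
proof -
  define c where "c i = y i / (\<Prod>j\<in>UNIV-{i}. (x i - x j))" for i
  define p where "p = (\<Sum>i\<in>UNIV. smult (c i) (\<Prod>j\<in>UNIV-{i}. [:- x j, 1:]))"
  have "poly p (x k) = y k" for k
  proof -
    have vanish: "(\<Prod>j\<in>UNIV-{i}. (x k - x j)) = 0" if "i \<noteq> k" for i
      using that by (subst prod_zero_iff) auto
    have "(\<Prod>j\<in>UNIV-{k}. (x k - x j)) \<noteq> 0"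
      using assms by (auto simp: prod_zero_iff dest: injD)
    moreover have "poly p (x k) = c k * (\<Prod>j\<in>UNIV-{k}. (x k - x j))"
      by (simp add: p_def poly_sum poly_prod sum.remove[of _ k] vanish)
    ultimately show ?thesis by (simp add: c_def)
  qed
  then show ?thesis by blast
qed

lemma mat_fun_eq_poly_mat:
  fixes S :: "real^'n::finite^'n"
  assumes S: "S \<in> isospectral lam" and inj: "inj lam" and p: "\<forall>i. poly p (lam i) = f (lam i)"
  shows "mat_fun f S = poly_mat p S"
proof -
  define Q where "Q = (SOME Q. orthogonal_matrix Q \<and> is_diag_mat (transpose Q ** S ** Q))"
  define D where "D = transpose Q ** S ** Q"
  obtain Q1 where Q1: "orthogonal_matrix Q1" "S = Q1 ** diag_mat lam ** transpose Q1"
    using isospectral_diagonalise[OF S inj] .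
  then have "transpose Q1 ** S ** Q1 = diag_mat lam"
    by (simp add: matrix_mul_assoc orthogonal_matrix_mult_cancel orthogonal_matrix)
  then have "\<exists>Q. orthogonal_matrix Q \<and> is_diag_mat (transpose Q ** S ** Q)"
    using Q1(1) is_diag_mat_diag_mat by metis
  then have Q: "orthogonal_matrix Q" and D: "is_diag_mat D"
    unfolding Q_def D_def by (metis (mono_tags, lifting) someI_ex)+
  have "D $ i $ i \<in> range lam" for i
    using diag_entry_in_real_eigenvalues[OF D] S real_eigenvalues_orthogonal_conj[OF Q]
    by (simp add: D_def isospectral_def)
  then have "f (D $ i $ i) = poly p (D $ i $ i)" for i
    using p by (metis rangeE)
  then have "(\<chi> i j. if i = j then f (D $ i $ i) else 0) = diag_mat (\<lambda>i. poly p (D $ i $ i))"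
    by (auto simp: diag_mat_def vec_eq_iff)
  also have "\<dots> = poly_mat p D"
    by (simp add: poly_mat_is_diag_mat[OF D])
  finally have "mat_fun f S = Q ** poly_mat p D ** transpose Q"
    unfolding mat_fun_def Let_def Q_def[symmetric] D_def[symmetric] by simp
  also have "\<dots> = poly_mat p S"
    using Q by (simp add: D_def poly_mat_orthogonal_conj[symmetric] matrix_mul_assoc
        orthogonal_matrix_mult_cancel orthogonal_matrix_def)
  finally show ?thesis .
qed

lemma poly_mat_isospectral:
  fixes S :: "real^'n::finite^'n"
  assumes S: "S \<in> isospectral lam" and inj: "inj lam" and p: "\<forall>i. poly p (lam i) = f (lam i)"
  obtains Q where "orthogonal_matrix Q" "S = Q ** diag_mat lam ** transpose Q"
    "poly_mat p S = Q ** diag_mat (\<lambda>i. f (lam i)) ** transpose Q"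
proof -
  obtain Q where "orthogonal_matrix Q" "S = Q ** diag_mat lam ** transpose Q"
    using isospectral_diagonalise[OF S inj] .
  with that show ?thesis by (simp add: poly_mat_orthogonal_conj poly_mat_diag_mat p)
qed

text \<open>Since the values f(lam i)^2 are distinct, S is a polynomial in the Gram matrix
  of p(S).\<close>

lemma is_diag_mat_if_gram_poly_mat_diag:
  fixes S :: "real^'n::finite^'n"
  assumes S: "S \<in> isospectral lam" and inj: "inj lam" and p: "\<forall>i. poly p (lam i) = f (lam i)"
    and f_abs: "\<And>i j. i \<noteq> j \<Longrightarrow> \<bar>f (lam i)\<bar> \<noteq> \<bar>f (lam j)\<bar>"
    and B: "is_diag_mat (gram (poly_mat p S))"
  shows "is_diag_mat S"
proof -
  obtain Q where Q: "orthogonal_matrix Q" "S = Q ** diag_mat lam ** transpose Q"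
    "poly_mat p S = Q ** diag_mat (\<lambda>i. f (lam i)) ** transpose Q"
    using poly_mat_isospectral[OF S inj p] .
  have "inj (\<lambda>i. f (lam i) ^ 2)"
  proof (rule injI)
    fix i j assume "f (lam i) ^ 2 = f (lam j) ^ 2"
    then have "\<bar>f (lam i)\<bar> = \<bar>f (lam j)\<bar>" by (metis real_sqrt_abs)
    then show "i = j" using f_abs by blast
  qed
  then obtain h where h: "\<forall>i. poly h (f (lam i) ^ 2) = lam i"
    using lagrange_interpolation_exists by blast
  have "S = Q ** diag_mat (\<lambda>i. poly h (f (lam i) ^ 2)) ** transpose Q"
    using Q(2) h by simp
  also have "\<dots> = poly_mat h (gram (poly_mat p S))"
    by (simp add: Q(1,3) gram_orthogonal_conj_diag_mat poly_mat_orthogonal_conj poly_mat_diag_mat)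
  also have "\<dots> = diag_mat (\<lambda>i. poly h (gram (poly_mat p S) $ i $ i))"
    by (rule poly_mat_is_diag_mat[OF B])
  finally show ?thesis by (metis is_diag_mat_diag_mat)
qed

lemma poly_mat_invertible:
  fixes S :: "real^'n::finite^'n"
  assumes S: "S \<in> isospectral lam" and inj: "inj lam" and p: "\<forall>i. poly p (lam i) = f (lam i)"
    and f_nz: "\<And>i. f (lam i) \<noteq> 0"
  shows "invertible (poly_mat p S)"
proof -
  obtain Q where Q: "orthogonal_matrix Q"
    "poly_mat p S = Q ** diag_mat (\<lambda>i. f (lam i)) ** transpose Q"
    using poly_mat_isospectral[OF S inj p] by metis
  have "poly_mat p S ** (Q ** diag_mat (\<lambda>i. 1 / f (lam i)) ** transpose Q)
      = Q ** diag_mat (\<lambda>i. f (lam i) * (1 / f (lam i))) ** transpose Q"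
    by (simp add: Q orthogonal_conj_mult diag_mat_mult_diag_mat)
  also have "\<dots> = mat 1"
    using f_nz Q(1) by (simp add: diag_mat_one orthogonal_matrix_def)
  finally show ?thesis unfolding invertible_right_inverse by (rule exI)
qed

section \<open>QR decomposition\<close>

lemma finite_linorder_less_induct:
  fixes j :: "'a::{finite,linorder}"
  assumes "\<And>j. (\<And>i. i < j \<Longrightarrow> P i) \<Longrightarrow> P j"
  shows "P j"
proof (induction j rule: measure_induct_rule[where f = "\<lambda>j. card {i. i < j}"])
  case (less j)
  show ?case
  proof (rule assms)
    fix i assume "i < j"
    then have "card {k. k < i} < card {k. k < j}" by (intro psubset_card_mono) auto
    then show "P i" by (rule less)
  qed
qed

lemma column_eq_matrix_vector_mult_axis: "column j A = A *v axis j (1::real)"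
  by (simp add: column_def matrix_vector_mult_def axis_def vec_eq_iff if_distrib if_distribR
      cong: if_cong)

lemma column_notin_span_other_columns:
  fixes A :: "real^'n::finite^'n"
  assumes inv: "invertible A" and b: "b \<notin> X"
  shows "column b A \<notin> span ((\<lambda>j. column j A) ` X)"
proof
  assume "column b A \<in> span ((\<lambda>j. column j A) ` X)"
  moreover have "(\<lambda>j. column j A) ` X = (\<lambda>x. A *v x) ` ((\<lambda>j. axis j 1) ` X)"
    by (auto simp: column_eq_matrix_vector_mult_axis image_image)
  ultimately have "column b A \<in> (\<lambda>x. A *v x) ` span ((\<lambda>j. axis j 1) ` X)"
    by (simp add: span_linear_image)
  then obtain y where y: "y \<in> span ((\<lambda>j. axis j 1) ` X)" "A *v axis b 1 = A *v y"
    by (auto simp: column_eq_matrix_vector_mult_axis)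
  have "axis b 1 = y" using inj_matrix_vector_mult[OF inv] y(2) by (auto dest: injD)
  moreover have "y $ b = 0" using y(1)
  proof (induction rule: span_induct_alt)
    case (step c x y) then show ?case using b by (auto simp: axis_def split: if_splits)
  qed simp
  ultimately have "(axis b 1 :: real^'n) $ b = 0" by simp
  then show False by simp
qed

lemma gram_schmidt_step:
  fixes a :: "'a::real_inner"
  assumes X: "finite X" and on: "\<forall>i\<in>X. \<forall>j\<in>X. q i \<bullet> q j = (if i = j then 1 else 0)"
    and a: "a \<notin> span (q ` X)"
  obtains u where "norm u = 1" "\<forall>i\<in>X. u \<bullet> q i = 0" "a \<bullet> u > 0"
    "a = (a \<bullet> u) *\<^sub>R u + (\<Sum>i\<in>X. (a \<bullet> q i) *\<^sub>R q i)"
proof -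
  define w where "w = a - (\<Sum>i\<in>X. (a \<bullet> q i) *\<^sub>R q i)"
  have "(\<Sum>i\<in>X. (a \<bullet> q i) *\<^sub>R q i) \<in> span (q ` X)"
    by (intro span_sum span_mul span_base) auto
  then have "w \<noteq> 0" using a by (auto simp: w_def)
  have wq: "w \<bullet> q j = 0" if "j \<in> X" for j
  proof -
    have "(\<Sum>i\<in>X. (a \<bullet> q i) * (q i \<bullet> q j)) = (\<Sum>i\<in>X. if i = j then a \<bullet> q j else 0)"
      using on that by (intro sum.cong) auto
    then show ?thesis using that X by (simp add: w_def inner_diff_left inner_sum_left)
  qed
  define u where "u = (1 / norm w) *\<^sub>R w"
  have "a \<bullet> u = norm w"
  proof -
    have "a \<bullet> w = (w + (\<Sum>i\<in>X. (a \<bullet> q i) *\<^sub>R q i)) \<bullet> w" by (simp add: w_def)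
    also have "\<dots> = norm w ^ 2"
      using wq by (simp add: inner_add_left inner_sum_left inner_commute[of "q _" w]
          power2_norm_eq_inner)
    finally show ?thesis by (simp add: u_def power2_eq_square \<open>w \<noteq> 0\<close>)
  qed
  moreover have "a = norm w *\<^sub>R u + (\<Sum>i\<in>X. (a \<bullet> q i) *\<^sub>R q i)"
    using \<open>w \<noteq> 0\<close> by (simp add: u_def w_def)
  moreover have "norm u = 1" "\<forall>i\<in>X. u \<bullet> q i = 0"
    using \<open>w \<noteq> 0\<close> wq by (simp_all add: u_def)
  ultimately show ?thesis using that \<open>w \<noteq> 0\<close> by simp
qed

definition gram_schmidt_on ::
    "real^('n::{finite,linorder})^('n::{finite,linorder}) \<Rightarrow> ('n::{finite,linorder}) set \<Rightarrow>
      ('n::{finite,linorder} \<Rightarrow> real^('n::{finite,linorder})) \<Rightarrow> bool"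
  where "gram_schmidt_on A X q \<longleftrightarrow>
    (\<forall>i\<in>X. \<forall>j\<in>X. q i \<bullet> q j = (if i = j then 1 else 0)) \<and>
    (\<forall>j\<in>X. column j A \<bullet> q j > 0 \<and>
      column j A = (\<Sum>i\<in>{i\<in>X. i \<le> j}. (column j A \<bullet> q i) *\<^sub>R q i)) \<and>
    q ` X \<subseteq> span ((\<lambda>j. column j A) ` X)"

lemma gram_schmidt_on_insert:
  fixes A :: "real^('n::{finite,linorder})^('n::{finite,linorder})"
  assumes inv: "invertible A" and X: "finite X" "\<forall>i\<in>X. i < b" and q: "gram_schmidt_on A X q"
  shows "\<exists>q'. gram_schmidt_on A (insert b X) q'"
proof -
  let ?a = "\<lambda>j. column j A"
  from q have on: "\<forall>i\<in>X. \<forall>j\<in>X. q i \<bullet> q j = (if i = j then 1 else 0)"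
    and rep: "\<forall>j\<in>X. ?a j \<bullet> q j > 0 \<and> ?a j = (\<Sum>i\<in>{i\<in>X. i \<le> j}. (?a j \<bullet> q i) *\<^sub>R q i)"
    and sp: "q ` X \<subseteq> span (?a ` X)"
    by (simp_all add: gram_schmidt_on_def)
  have b: "b \<notin> X" using X(2) by blast
  have "span (q ` X) \<subseteq> span (?a ` X)" using sp by (simp add: span_minimal)
  then have "?a b \<notin> span (q ` X)" using column_notin_span_other_columns[OF inv b] by blast
  then obtain u where u: "norm u = 1" "\<forall>i\<in>X. u \<bullet> q i = 0" "?a b \<bullet> u > 0"
    "?a b = (?a b \<bullet> u) *\<^sub>R u + (\<Sum>i\<in>X. (?a b \<bullet> q i) *\<^sub>R q i)"
    using gram_schmidt_step[OF X(1) on] by blast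
  define q' where "q' = q(b := u)"
  have "\<forall>i\<in>insert b X. \<forall>j\<in>insert b X. q' i \<bullet> q' j = (if i = j then 1 else 0)"
    using on u(1,2) b by (auto simp: q'_def inner_commute norm_eq_1)
  moreover have "?a j \<bullet> q' j > 0 \<and> ?a j = (\<Sum>i\<in>{i\<in>insert b X. i \<le> j}. (?a j \<bullet> q' i) *\<^sub>R q' i)"
    if "j \<in> insert b X" for j
  proof (cases "j = b")
    case True
    have "{i\<in>insert b X. i \<le> b} = insert b X" using X(2) by auto
    moreover have "(\<Sum>i\<in>X. (?a b \<bullet> q' i) *\<^sub>R q' i) = (\<Sum>i\<in>X. (?a b \<bullet> q i) *\<^sub>R q i)"
      using b by (intro sum.cong) (auto simp: q'_def)
    ultimately show ?thesis using True u(3,4) X(1) b by (simp add: q'_def)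
  next
    case False
    then have j: "j \<in> X" using that by simp
    then have "{i\<in>insert b X. i \<le> j} = {i\<in>X. i \<le> j}" using X(2) by auto
    moreover have "(\<Sum>i\<in>{i\<in>X. i \<le> j}. (?a j \<bullet> q' i) *\<^sub>R q' i)
        = (\<Sum>i\<in>{i\<in>X. i \<le> j}. (?a j \<bullet> q i) *\<^sub>R q i)"
      using b by (intro sum.cong) (auto simp: q'_def)
    ultimately show ?thesis using rep j False by (simp add: q'_def)
  qed
  moreover have "q' ` insert b X \<subseteq> span (?a ` insert b X)"
  proof -
    have "span (?a ` X) \<subseteq> span (?a ` insert b X)" by (intro span_mono) auto
    then have qX: "q i \<in> span (?a ` insert b X)" if "i \<in> X" for i using sp that by blast
    have "u = (1 / (?a b \<bullet> u)) *\<^sub>R (?a b - (\<Sum>i\<in>X. (?a b \<bullet> q i) *\<^sub>R q i))"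
      using u(3) by (subst (2) u(4)) simp
    also have "\<dots> \<in> span (?a ` insert b X)"
      by (intro span_mul span_diff span_sum span_base qX) auto
    finally show ?thesis using qX b by (auto simp: q'_def)
  qed
  ultimately show ?thesis unfolding gram_schmidt_on_def by blast
qed

lemma gram_schmidt_on_UNIV_exists:
  fixes A :: "real^('n::{finite,linorder})^('n::{finite,linorder})"
  assumes "invertible A"
  shows "\<exists>q. gram_schmidt_on A UNIV q"
proof -
  have "\<exists>q. gram_schmidt_on A X q" if "finite X" for X
    using that
  proof (induction X rule: finite_linorder_max_induct)
    case empty
    then show ?case by (simp add: gram_schmidt_on_def)
  next
    case (insert b X)
    then show ?case using gram_schmidt_on_insert[OF assms] by blast
  qed
  then show ?thesis by simp
qed

lemma qr_decomposition_exists: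
  fixes A :: "real^('n::{finite,linorder})^('n::{finite,linorder})"
  assumes "invertible A"
  obtains Q R where "orthogonal_matrix Q" "upper_triangular R" "\<forall>i. R $ i $ i > 0" "A = Q ** R"
proof -
  obtain q where "gram_schmidt_on A UNIV q" using gram_schmidt_on_UNIV_exists[OF assms] ..
  then have on: "\<forall>i j. q i \<bullet> q j = (if i = j then 1 else 0)"
    and pos: "\<forall>j. column j A \<bullet> q j > 0"
    and rep: "\<forall>j. column j A = (\<Sum>i\<in>{i. i \<le> j}. (column j A \<bullet> q i) *\<^sub>R q i)"
    by (simp_all add: gram_schmidt_on_def)
  define Q where "Q = (\<chi> k i. q i $ k)"
  define R where "R = (\<chi> i j. if i \<le> j then column j A \<bullet> q i else 0)"
  have "orthogonal_matrix Q"
    unfolding orthogonal_matrix_orthonormal_columns using on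
    by (simp add: Q_def column_def orthogonal_def norm_eq_1)
  moreover have "upper_triangular R" "\<forall>i. R $ i $ i > 0"
    using pos by (auto simp: upper_triangular_def R_def)
  moreover have "A $ k $ j = (Q ** R) $ k $ j" for k j
  proof -
    have "A $ k $ j = column j A $ k" by (simp add: column_def)
    also have "\<dots> = (\<Sum>i\<in>{i. i \<le> j}. (column j A \<bullet> q i) * q i $ k)"
      using arg_cong[OF rep[rule_format, of j], of "\<lambda>v. v $ k"] by (simp add: sum_component)
    also have "\<dots> = (Q ** R) $ k $ j"
      by (simp add: matrix_matrix_mult_def Q_def R_def mult.commute if_distrib sum.If_cases)
    finally show ?thesis .
  qed
  then have "A = Q ** R" by (simp add: vec_eq_iff)
  ultimately show ?thesis using that by blast
qed

lemma matrix_mult_upper_triangular_nth: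
  fixes M R :: "real^('n::{finite,linorder})^('n::{finite,linorder})"
  assumes R: "upper_triangular R" and unit: "\<And>i. i < j \<Longrightarrow> \<forall>k. M $ k $ i = (if k = i then 1 else 0)"
    and k: "\<not> k < j"
  shows "(M ** R) $ k $ j = M $ k $ j * R $ j $ j"
proof -
  have "M $ k $ i * R $ i $ j = (if i = j then M $ k $ j * R $ j $ j else 0)" for i
  proof (cases i j rule: linorder_cases)
    case less
    then have "M $ k $ i = 0" using unit[OF less] k by auto
    then show ?thesis using less by simp
  next
    case greater
    then show ?thesis using R by (simp add: upper_triangular_def)
  qed simp
  then have "(\<Sum>i\<in>UNIV. M $ k $ i * R $ i $ j)
      = (\<Sum>i\<in>UNIV. if i = j then M $ k $ j * R $ j $ j else 0)"
    by (intro sum.cong refl)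
  then show ?thesis by (simp add: matrix_matrix_mult_def)
qed

text \<open>The first j columns of M are unit vectors, by induction on j: triangularity of the factors
  forces the entries below the diagonal to vanish, orthogonality those above it, and the positive
  diagonals fix the sign.\<close>

lemma orthogonal_eq_id_if_maps_upper_triangular:
  fixes M :: "real^('n::{finite,linorder})^('n::{finite,linorder})"
  assumes M: "orthogonal_matrix M" and R1: "upper_triangular R1" and R2: "upper_triangular R2"
    and pos1: "\<forall>i. R1 $ i $ i > 0" and pos2: "\<forall>i. R2 $ i $ i > 0" and MR: "M ** R1 = R2"
  shows "M = mat 1"
proof -
  have MtM: "(\<Sum>l\<in>UNIV. M $ l $ k * M $ l $ j) = (if k = j then 1 else 0)" for k j
  proof -
    have "(transpose M ** M) $ k $ j = (if k = j then 1 else 0)"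
      using M by (simp add: orthogonal_matrix_def mat_def)
    then show ?thesis by (simp add: matrix_matrix_mult_def transpose_def)
  qed
  have "\<forall>k. M $ k $ j = (if k = j then 1 else 0)" for j
  proof (induction j rule: finite_linorder_less_induct)
    case (1 j)
    have col: "R2 $ k $ j = M $ k $ j * R1 $ j $ j" if "\<not> k < j" for k
      using matrix_mult_upper_triangular_nth[OF R1 1 that] MR by simp
    have below: "M $ k $ j = 0" if "j < k" for k
      using col[of k] R2 that pos1[rule_format, of j] by (simp add: upper_triangular_def)
    have above: "M $ k $ j = 0" if "k < j" for k
    proof -
      have "(\<Sum>l\<in>UNIV. M $ l $ k * M $ l $ j) = (\<Sum>l\<in>UNIV. if l = k then M $ k $ j else 0)"
        using 1[OF that] by (intro sum.cong) auto
      moreover have "k \<noteq> j" using that by simp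
      ultimately show ?thesis using MtM[of k j] by simp
    qed
    have "(\<Sum>l\<in>UNIV. M $ l $ j * M $ l $ j) = (\<Sum>l\<in>UNIV. if l = j then M $ j $ j * M $ j $ j else 0)"
      by (intro sum.cong refl) (use below above in \<open>auto simp: linorder_neq_iff\<close>)
    then have "(M $ j $ j - 1) * (M $ j $ j + 1) = 0"
      using MtM[of j j] by (simp add: algebra_simps)
    moreover have "M $ j $ j > 0"
      using col[of j] pos1[rule_format, of j] pos2[rule_format, of j]
      by (simp add: zero_less_mult_iff)
    ultimately have "M $ j $ j = 1" by simp
    then show ?case using below above by (metis linorder_cases)
  qed
  then show ?thesis by (simp add: mat_def vec_eq_iff)
qed

lemma qr_decomposition_unique:
  fixes Q1 Q2 R1 R2 :: "real^('n::{finite,linorder})^('n::{finite,linorder})"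
  assumes "orthogonal_matrix Q1" "orthogonal_matrix Q2"
    and "upper_triangular R1" "upper_triangular R2"
    and "\<forall>i. R1 $ i $ i > 0" "\<forall>i. R2 $ i $ i > 0"
    and eq: "Q1 ** R1 = Q2 ** R2"
  shows "Q1 = Q2"
proof -
  have "(transpose Q2 ** Q1) ** R1 = R2"
    using assms(2)
    by (simp add: eq flip: matrix_mul_assoc) (simp add: matrix_mul_assoc orthogonal_matrix)
  then have "transpose Q2 ** Q1 = mat 1"
    using assms
    by (intro orthogonal_eq_id_if_maps_upper_triangular) (auto simp: orthogonal_matrix_mul)
  then have "Q2 ** (transpose Q2 ** Q1) = Q2" by simp
  then show ?thesis using assms(2) by (simp add: matrix_mul_assoc orthogonal_matrix_def)
qed

lemma qr_Q_factorisation: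
  fixes A :: "real^('n::{finite,linorder})^('n::{finite,linorder})"
  assumes "invertible A"
  obtains R where "orthogonal_matrix (qr_Q A)" "upper_triangular R" "\<forall>i. R $ i $ i > 0"
    "A = qr_Q A ** R"
proof -
  have "\<exists>!Q. \<exists>R. orthogonal_matrix Q \<and> upper_triangular R \<and> (\<forall>i. R $ i $ i > 0) \<and> A = Q ** R"
    using qr_decomposition_exists[OF assms] qr_decomposition_unique by metis
  then have "\<exists>R. orthogonal_matrix (qr_Q A) \<and> upper_triangular R \<and> (\<forall>i. R $ i $ i > 0) \<and>
      A = qr_Q A ** R"
    unfolding qr_Q_def by (rule theI')
  then show ?thesis using that by blast
qed

section \<open>A Lyapunov function for the QR step\<close>

definition rank_weight :: "'n::{finite,linorder} \<Rightarrow> real" where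
  "rank_weight k = real (card {l. k < l})"

definition weighted_diag :: "real^('n::{finite,linorder})^('n::{finite,linorder}) \<Rightarrow> real" where
  "weighted_diag B = (\<Sum>k\<in>UNIV. rank_weight k * B $ k $ k)"

definition strict_upper_sqnorm :: "real^('n::{finite,linorder})^('n::{finite,linorder}) \<Rightarrow> real"
  where
  "strict_upper_sqnorm R = (\<Sum>i\<in>UNIV. \<Sum>j\<in>UNIV. if i < j then (R $ i $ j)\<^sup>2 else 0)"

definition offdiag_abs_sum :: "real^'n::finite^'n \<Rightarrow> real" where
  "offdiag_abs_sum B = (\<Sum>k\<in>UNIV. \<Sum>l\<in>UNIV - {k}. \<bar>B $ k $ l\<bar>)"

lemma rank_weight_nonneg: "0 \<le> rank_weight k"
  by (simp add: rank_weight_def)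

lemma rank_weight_diff_ge_1:
  assumes "i < j"
  shows "1 \<le> rank_weight i - rank_weight j"
proof -
  have "{l. j < l} \<subset> {l. i < l}" using assms by auto
  then have "card {l. j < l} < card {l. i < l}" by (intro psubset_card_mono) auto
  then show ?thesis by (simp add: rank_weight_def)
qed

text \<open>Passing from R^T R to R R^T moves the squared entries of each column of R to
  the rows above, where the weight is larger.\<close>

lemma strict_upper_sqnorm_le_weighted_diag_diff:
  fixes R :: "real^('n::{finite,linorder})^('n::{finite,linorder})"
  assumes "upper_triangular R"
  shows "strict_upper_sqnorm R \<le> weighted_diag (R ** transpose R) - weighted_diag (gram R)"
proof -
  have "weighted_diag (R ** transpose R) - weighted_diag (gram R)
      = (\<Sum>i\<in>UNIV. \<Sum>j\<in>UNIV. rank_weight i * (R $ i $ j)\<^sup>2)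
        - (\<Sum>j\<in>UNIV. \<Sum>i\<in>UNIV. rank_weight j * (R $ i $ j)\<^sup>2)"
    by (simp add: weighted_diag_def gram_def matrix_matrix_mult_def transpose_def
        power2_eq_square sum_distrib_left mult.assoc)
  also have "\<dots> = (\<Sum>i\<in>UNIV. \<Sum>j\<in>UNIV. (rank_weight i - rank_weight j) * (R $ i $ j)\<^sup>2)"
    by (subst sum.swap[of _ UNIV UNIV]) (simp add: sum_subtractf[symmetric] left_diff_distrib)
  finally show ?thesis
    unfolding strict_upper_sqnorm_def
  proof (elim ssubst, intro sum_mono)
    fix i j :: 'n
    show "(if i < j then (R $ i $ j)\<^sup>2 else 0) \<le> (rank_weight i - rank_weight j) * (R $ i $ j)\<^sup>2"
    proof (cases i j rule: linorder_cases)
      case less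
      then show ?thesis
        using rank_weight_diff_ge_1[OF less] mult_right_mono[of 1 _ "(R $ i $ j)\<^sup>2"] by simp
    next
      case greater
      then show ?thesis using assms by (simp add: upper_triangular_def)
    qed simp
  qed
qed

lemma strict_upper_sqnorm_nonneg: "0 \<le> strict_upper_sqnorm R"
  unfolding strict_upper_sqnorm_def by (intro sum_nonneg) auto

lemma strict_upper_entry_sq_le:
  fixes R :: "real^('n::{finite,linorder})^('n::{finite,linorder})"
  assumes "i < j"
  shows "(R $ i $ j)\<^sup>2 \<le> strict_upper_sqnorm R"
proof -
  have "(R $ i $ j)\<^sup>2 \<le> (\<Sum>j'\<in>UNIV. if i < j' then (R $ i $ j')\<^sup>2 else 0)"
    using member_le_sum[of j UNIV "\<lambda>j'. if i < j' then (R $ i $ j')\<^sup>2 else 0"] assms by simp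
  also have "\<dots> \<le> strict_upper_sqnorm R"
    unfolding strict_upper_sqnorm_def
    by (rule member_le_sum[of i UNIV "\<lambda>i. \<Sum>j'\<in>UNIV. if i < j' then (R $ i $ j')\<^sup>2 else 0"])
      (auto intro: sum_nonneg)
  finally show ?thesis .
qed

lemma gram_diag_eq_sum_sq: "gram A $ k $ k = (\<Sum>i\<in>UNIV. (A $ i $ k)\<^sup>2)"
  by (simp add: gram_def matrix_matrix_mult_def transpose_def power2_eq_square)

lemma gram_diag_nonneg: "0 \<le> gram A $ k $ k"
  by (simp add: gram_diag_eq_sum_sq sum_nonneg)

text \<open>In (R^T R)_kl = sum_i R_ik R_il with k < l, only rows i \<le> k contribute, so every
  second factor is a strictly upper entry.\<close>

lemma gram_upper_triangular_entry_bound: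
  fixes R :: "real^('n::{finite,linorder})^('n::{finite,linorder})"
  assumes R: "upper_triangular R" and c: "\<forall>k. gram R $ k $ k \<le> c" and kl: "k < l"
  shows "\<bar>gram R $ k $ l\<bar> \<le> real CARD('n) * (sqrt c * sqrt (strict_upper_sqnorm R))"
proof -
  have c0: "0 \<le> c" using c gram_diag_nonneg order.trans by blast
  have summand: "\<bar>R $ i $ k * R $ i $ l\<bar> \<le> sqrt c * sqrt (strict_upper_sqnorm R)" for i
  proof (cases "k < i")
    case True
    then show ?thesis
      using R c0 strict_upper_sqnorm_nonneg[of R] by (simp add: upper_triangular_def)
  next
    case False
    have "(R $ i $ k)\<^sup>2 \<le> gram R $ k $ k"
      unfolding gram_diag_eq_sum_sq by (rule member_le_sum) auto
    then have "\<bar>R $ i $ k\<bar> \<le> sqrt c" using c[rule_format, of k] by (simp add: real_le_rsqrt)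
    moreover have "\<bar>R $ i $ l\<bar> \<le> sqrt (strict_upper_sqnorm R)"
      using strict_upper_entry_sq_le[of i l R] False kl by (simp add: real_le_rsqrt)
    ultimately show ?thesis by (simp add: abs_mult mult_mono')
  qed
  have "\<bar>gram R $ k $ l\<bar> \<le> (\<Sum>i\<in>UNIV. \<bar>R $ i $ k * R $ i $ l\<bar>)"
    by (simp add: gram_def matrix_matrix_mult_def transpose_def sum_abs)
  also have "\<dots> \<le> (\<Sum>i\<in>(UNIV::'n set). sqrt c * sqrt (strict_upper_sqnorm R))"
    by (intro sum_mono summand)
  also have "\<dots> = real CARD('n) * (sqrt c * sqrt (strict_upper_sqnorm R))" by simp
  finally show ?thesis .
qed

lemma offdiag_abs_sum_gram_upper_triangular:
  fixes R :: "real^('n::{finite,linorder})^('n::{finite,linorder})"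
  assumes R: "upper_triangular R" and c: "\<forall>k. gram R $ k $ k \<le> c"
  shows "offdiag_abs_sum (gram R) \<le> real CARD('n) ^ 3 * sqrt c * sqrt (strict_upper_sqnorm R)"
proof -
  define e where "e = real CARD('n) * (sqrt c * sqrt (strict_upper_sqnorm R))"
  have "0 \<le> c" using c gram_diag_nonneg order.trans by blast
  then have "0 \<le> e" by (simp add: e_def strict_upper_sqnorm_nonneg)
  have sym: "gram R $ k $ l = gram R $ l $ k" for k l
    by (simp add: gram_def matrix_matrix_mult_def transpose_def mult.commute)
  have "\<bar>gram R $ k $ l\<bar> \<le> e" if "l \<in> UNIV - {k}" for k l
    using that gram_upper_triangular_entry_bound[OF R c, of k l]
      gram_upper_triangular_entry_bound[OF R c, of l k]
    by (cases k l rule: linorder_cases) (simp_all add: sym e_def)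
  then have "offdiag_abs_sum (gram R) \<le> (\<Sum>k\<in>(UNIV::'n set). \<Sum>l\<in>UNIV - {k}. e)"
    unfolding offdiag_abs_sum_def by (intro sum_mono)
  also have "\<dots> \<le> (\<Sum>k\<in>(UNIV::'n set). \<Sum>l\<in>(UNIV::'n set). e)"
    using \<open>0 \<le> e\<close> by (intro sum_mono sum_mono2) auto
  finally show ?thesis by (simp add: e_def power3_eq_cube mult_ac)
qed

lemma offdiag_abs_sum_nonneg: "0 \<le> offdiag_abs_sum B"
  unfolding offdiag_abs_sum_def by (intro sum_nonneg) auto

lemma offdiag_abs_sum_eq_0_iff: "offdiag_abs_sum B = 0 \<longleftrightarrow> is_diag_mat B"
  unfolding offdiag_abs_sum_def is_diag_mat_def
  by (fastforce simp: sum_nonneg_eq_0_iff sum_nonneg)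

lemma orthogonal_conj_diag_mat_diag_le_sum:
  assumes Q: "orthogonal_matrix Q" and d: "\<forall>j. 0 \<le> d j"
  shows "(Q ** diag_mat d ** transpose Q) $ k $ k \<le> (\<Sum>j\<in>UNIV. d j)"
proof -
  have "(\<Sum>j\<in>UNIV. (Q $ k $ j)\<^sup>2) = (Q ** transpose Q) $ k $ k"
    by (simp add: matrix_matrix_mult_def transpose_def power2_eq_square)
  also have "\<dots> = 1" using Q by (simp add: orthogonal_matrix_def mat_def)
  finally have "(Q $ k $ j)\<^sup>2 \<le> 1" for j
    using member_le_sum[of j UNIV "\<lambda>j. (Q $ k $ j)\<^sup>2"] by simp
  then have "(\<Sum>j\<in>UNIV. (Q $ k $ j)\<^sup>2 * d j) \<le> (\<Sum>j\<in>UNIV. d j)"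
    using d by (intro sum_mono) (simp add: mult_left_le_one_le)
  then show ?thesis by (simp add: orthogonal_conj_diag_mat_nth power2_eq_square mult_ac)
qed

lemma gram_poly_mat_diag_le:
  fixes S :: "real^('n::{finite,linorder})^('n::{finite,linorder})"
  assumes S: "S \<in> isospectral lam" and inj: "inj lam" and p: "\<forall>i. poly p (lam i) = f (lam i)"
  shows "gram (poly_mat p S) $ k $ k \<le> (\<Sum>j\<in>UNIV. f (lam j) ^ 2)"
proof -
  obtain Q where Q: "orthogonal_matrix Q"
    "poly_mat p S = Q ** diag_mat (\<lambda>i. f (lam i)) ** transpose Q"
    using poly_mat_isospectral[OF S inj p] by metis
  then show ?thesis
    by (simp add: gram_orthogonal_conj_diag_mat orthogonal_conj_diag_mat_diag_le_sum)
qed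

lemma weighted_diag_gram_poly_mat_bounds:
  fixes S :: "real^('n::{finite,linorder})^('n::{finite,linorder})"
  assumes S: "S \<in> isospectral lam" and inj: "inj lam" and p: "\<forall>i. poly p (lam i) = f (lam i)"
  shows "0 \<le> weighted_diag (gram (poly_mat p S))"
    and "weighted_diag (gram (poly_mat p S))
      \<le> (\<Sum>k\<in>(UNIV::'n set). rank_weight k) * (\<Sum>j\<in>UNIV. f (lam j) ^ 2)"
proof -
  show "0 \<le> weighted_diag (gram (poly_mat p S))"
    unfolding weighted_diag_def
    by (intro sum_nonneg mult_nonneg_nonneg rank_weight_nonneg gram_diag_nonneg)
  show "weighted_diag (gram (poly_mat p S))
      \<le> (\<Sum>k\<in>(UNIV::'n set). rank_weight k) * (\<Sum>j\<in>UNIV. f (lam j) ^ 2)"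
    unfolding weighted_diag_def sum_distrib_right
    by (intro sum_mono mult_left_mono rank_weight_nonneg gram_poly_mat_diag_le[OF S inj p])
qed

lemma qr_step_gram_factorisation:
  fixes S :: "real^('n::{finite,linorder})^('n::{finite,linorder})"
  assumes S: "S \<in> isospectral lam" and inj: "inj lam" and p: "\<forall>i. poly p (lam i) = f (lam i)"
    and f_nz: "\<And>i. f (lam i) \<noteq> 0"
  obtains R where "upper_triangular R" "gram (poly_mat p S) = gram R"
    "gram (poly_mat p (qr_step f S)) = R ** transpose R" "qr_step f S \<in> isospectral lam"
proof -
  define A where "A = poly_mat p S"
  define Q where "Q = qr_Q A"
  obtain R where Q: "orthogonal_matrix Q" and R: "upper_triangular R" and AQR: "A = Q ** R"
    using qr_Q_factorisation[OF poly_mat_invertible[OF S inj p f_nz]] unfolding A_def Q_def by blast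
  have F: "qr_step f S = transpose Q ** S ** Q"
    unfolding qr_step_def Let_def mat_fun_eq_poly_mat[OF S inj p] Q_def A_def ..
  have F_iso: "qr_step f S \<in> isospectral lam" using F isospectral_orthogonal_conj[OF S Q] by simp
  have "poly_mat p (qr_step f S) = transpose Q ** A ** Q"
    using poly_mat_orthogonal_conj[of "transpose Q" p S] Q by (simp add: F A_def)
  also have "\<dots> = R ** Q" using Q by (simp add: AQR matrix_mul_assoc orthogonal_matrix)
  finally have A': "poly_mat p (qr_step f S) = R ** Q" .
  have "gram (poly_mat p (qr_step f S))
      = poly_mat p (qr_step f S) ** transpose (poly_mat p (qr_step f S))"
    using F_iso by (simp add: gram_def transpose_poly_mat isospectral_def)
  also have "\<dots> = R ** transpose R"
    using Q by (simp add: A' matrix_transpose_mul matrix_mul_assoc orthogonal_matrix_mult_cancel)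
  finally have "gram (poly_mat p (qr_step f S)) = R ** transpose R" .
  moreover have "gram (poly_mat p S) = gram R"
    using Q by (simp add: gram_def A_def[symmetric] AQR matrix_transpose_mul matrix_mul_assoc
        orthogonal_matrix_mult_cancel)
  ultimately show ?thesis using that R F_iso by blast
qed

lemma qr_step_lyapunov:
  fixes S :: "real^('n::{finite,linorder})^('n::{finite,linorder})" and p :: "real poly"
  defines "V \<equiv> \<lambda>S. weighted_diag (gram (poly_mat p S))"
  assumes S: "S \<in> isospectral lam" and inj: "inj lam" and p: "\<forall>i. poly p (lam i) = f (lam i)"
    and f_nz: "\<And>i. f (lam i) \<noteq> 0"
  shows "qr_step f S \<in> isospectral lam" and "V S \<le> V (qr_step f S)"
    and "offdiag_abs_sum (gram (poly_mat p S))
      \<le> real CARD('n) ^ 3 * sqrt (\<Sum>j\<in>UNIV. f (lam j) ^ 2) * sqrt (V (qr_step f S) - V S)"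
proof -
  obtain R where R: "upper_triangular R" "gram (poly_mat p S) = gram R"
    "gram (poly_mat p (qr_step f S)) = R ** transpose R" "qr_step f S \<in> isospectral lam"
    using qr_step_gram_factorisation[OF S inj p f_nz] .
  have gain: "strict_upper_sqnorm R \<le> V (qr_step f S) - V S"
    using strict_upper_sqnorm_le_weighted_diag_diff[OF R(1)] R(2,3) by (simp add: V_def)
  then show "V S \<le> V (qr_step f S)" using strict_upper_sqnorm_nonneg[of R] by simp
  show "qr_step f S \<in> isospectral lam" by (fact R(4))
  have "\<forall>k. gram R $ k $ k \<le> (\<Sum>j\<in>UNIV. f (lam j) ^ 2)"
    using gram_poly_mat_diag_le[OF S inj p] R(2) by metis
  then have "offdiag_abs_sum (gram (poly_mat p S))
      \<le> real CARD('n) ^ 3 * sqrt (\<Sum>j\<in>UNIV. f (lam j) ^ 2) * sqrt (strict_upper_sqnorm R)"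
    using offdiag_abs_sum_gram_upper_triangular[OF R(1)] R(2) by simp
  also have "\<dots> \<le> real CARD('n) ^ 3 * sqrt (\<Sum>j\<in>UNIV. f (lam j) ^ 2) * sqrt (V (qr_step f S) - V S)"
    using gain by (intro mult_left_mono real_sqrt_le_mono) (simp_all add: sum_nonneg)
  finally show "offdiag_abs_sum (gram (poly_mat p S))
      \<le> real CARD('n) ^ 3 * sqrt (\<Sum>j\<in>UNIV. f (lam j) ^ 2) * sqrt (V (qr_step f S) - V S)" .
qed

section \<open>Counting visits\<close>

lemma compact_uniform_lower_bound:
  fixes h g :: "'a::topological_space \<Rightarrow> real"
  assumes "compact K" "continuous_on K h" "\<forall>x\<in>K. 0 < h x" "0 \<le> C"
    and "\<forall>x\<in>K. h x \<le> C * sqrt (g x)"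
  shows "\<exists>\<delta>>0. \<forall>x\<in>K. \<delta> \<le> g x"
proof (cases "K = {}")
  case False
  then obtain x0 where x0: "x0 \<in> K" "\<forall>x\<in>K. h x0 \<le> h x"
    using continuous_attains_inf[OF assms(1) _ assms(2)] by blast
  define m where "m = h x0"
  have "0 < m" using assms(3) x0(1) by (simp add: m_def)
  have bound: "m \<le> C * sqrt (g x)" if "x \<in> K" for x
    using x0(2) assms(5) that unfolding m_def by (meson order.trans)
  have "0 < C"
    using bound[OF x0(1)] \<open>0 < m\<close> \<open>0 \<le> C\<close> by (cases "C = 0") auto
  have "(m / C)\<^sup>2 \<le> g x" if "x \<in> K" for x
  proof -
    have "m / C \<le> sqrt (g x)" using bound[OF that] \<open>0 < C\<close> by (simp add: divide_le_eq mult.commute)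
    then show ?thesis using \<open>0 < m\<close> \<open>0 < C\<close> by (intro sqrt_ge_absD) simp
  qed
  then show ?thesis using \<open>0 < m\<close> \<open>0 < C\<close> by (intro exI[of _ "(m / C)\<^sup>2"]) auto
qed (use zero_less_one in blast)

lemma qr_step_uniform_gain:
  fixes K :: "(real^('n::{finite,linorder})^('n::{finite,linorder})) set" and p :: "real poly"
  defines "V \<equiv> \<lambda>S. weighted_diag (gram (poly_mat p S))"
  assumes inj: "inj lam" and p: "\<forall>i. poly p (lam i) = f (lam i)"
    and f_nz: "\<And>i. f (lam i) \<noteq> 0"
    and f_abs: "\<And>i j. i \<noteq> j \<Longrightarrow> \<bar>f (lam i)\<bar> \<noteq> \<bar>f (lam j)\<bar>"
    and K: "compact K" "K \<subseteq> isospectral lam" "\<forall>S\<in>K. \<not> is_diag_mat S"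
  obtains \<delta> where "0 < \<delta>" "\<forall>S\<in>K. V S + \<delta> \<le> V (qr_step f S)"
proof -
  define h where "h S = offdiag_abs_sum (gram (poly_mat p S))"
    for S :: "real^('n::{finite,linorder})^('n::{finite,linorder})"
  define C where "C = real CARD('n) ^ 3 * sqrt (\<Sum>j\<in>UNIV. f (lam j) ^ 2)"
  have "continuous_on K h"
    unfolding h_def offdiag_abs_sum_def gram_def by (intro continuous_intros)
  moreover have "\<forall>S\<in>K. 0 < h S"
  proof
    fix S assume "S \<in> K"
    then have "\<not> is_diag_mat (gram (poly_mat p S))"
      using K(2,3) is_diag_mat_if_gram_poly_mat_diag[OF _ inj p f_abs] by blast
    then show "0 < h S"
      by (simp add: h_def order.strict_iff_order offdiag_abs_sum_nonneg offdiag_abs_sum_eq_0_iff)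
  qed
  moreover have "0 \<le> C" by (simp add: C_def sum_nonneg)
  moreover have "\<forall>S\<in>K. h S \<le> C * sqrt (V (qr_step f S) - V S)"
    using qr_step_lyapunov(3)[OF _ inj p f_nz] K(2) by (auto simp: h_def V_def C_def)
  ultimately have "\<exists>\<delta>>0. \<forall>S\<in>K. \<delta> \<le> V (qr_step f S) - V S"
    by (rule compact_uniform_lower_bound[OF K(1)])
  then show ?thesis using that by force
qed

lemma finite_card_le_if_initial_segments_card_le:
  fixes A :: "nat set"
  assumes "\<And>k. card {j\<in>A. j < k} \<le> N"
  shows "finite A" "card A \<le> N"
proof -
  show "finite A"
  proof (rule ccontr)
    assume "infinite A"
    then obtain B where B: "finite B" "card B = Suc N" "B \<subseteq> A"
      using infinite_arbitrarily_large by blast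
    obtain k where "B \<subseteq> {..<k}" using finite_nat_bounded[OF B(1)] by blast
    then have "B \<subseteq> {j\<in>A. j < k}" using B(3) by auto
    then have "card B \<le> card {j\<in>A. j < k}" by (intro card_mono) auto
    with assms[of k] B(2) show False by simp
  qed
  then obtain k where "A \<subseteq> {..<k}" using finite_nat_bounded by blast
  then have "{j\<in>A. j < k} = A" by auto
  with assms[of k] show "card A \<le> N" by simp
qed

lemma orbit_visits_bounded_by_lyapunov:
  fixes F :: "'a \<Rightarrow> 'a" and V :: "'a \<Rightarrow> real"
  assumes invariant: "\<And>y. y \<in> X \<Longrightarrow> F y \<in> X" and x: "x \<in> X"
    and bounded: "\<And>y. y \<in> X \<Longrightarrow> 0 \<le> V y \<and> V y \<le> M"
    and mono: "\<And>y. y \<in> X \<Longrightarrow> V y \<le> V (F y)"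
    and gain: "\<And>y. y \<in> X \<Longrightarrow> y \<in> K \<Longrightarrow> V y + \<delta> \<le> V (F y)" and "0 < \<delta>"
  shows "finite {k. (F ^^ k) x \<in> K}" "card {k. (F ^^ k) x \<in> K} \<le> nat \<lfloor>M / \<delta>\<rfloor>"
proof -
  define s where "s k = (F ^^ k) x" for k
  have s: "s k \<in> X" for k by (induction k) (simp_all add: s_def x invariant)
  have grow: "V (s 0) + \<delta> * card {j. j < k \<and> s j \<in> K} \<le> V (s k)" for k
  proof (induction k)
    case (Suc k)
    show ?case
    proof (cases "s k \<in> K")
      case True
      then have "{j. j < Suc k \<and> s j \<in> K} = insert k {j. j < k \<and> s j \<in> K}" by auto
      then show ?thesis
        using Suc gain[OF s True] by (simp add: s_def algebra_simps)
    next
      case False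
      then have "{j. j < Suc k \<and> s j \<in> K} = {j. j < k \<and> s j \<in> K}" using less_Suc_eq by auto
      then show ?thesis using Suc mono[OF s[of k]] by (simp add: s_def)
    qed
  qed simp
  have "card {j\<in>{k. s k \<in> K}. j < k} \<le> nat \<lfloor>M / \<delta>\<rfloor>" for k
  proof -
    have "\<delta> * card {j. j < k \<and> s j \<in> K} \<le> M"
      using grow[of k] bounded[OF s[of k]] bounded[OF s[of 0]] by linarith
    then have "card {j. j < k \<and> s j \<in> K} \<le> M / \<delta>" using \<open>0 < \<delta>\<close> by (simp add: field_simps)
    then show ?thesis by (simp add: le_nat_floor conj_commute)
  qed
  from finite_card_le_if_initial_segments_card_le[OF this]
  show "finite {k. (F ^^ k) x \<in> K}" "card {k. (F ^^ k) x \<in> K} \<le> nat \<lfloor>M / \<delta>\<rfloor>"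
    by (simp_all add: s_def)
qed

theorem corollary2p8:
  fixes lam :: "'n::{finite,linorder} \<Rightarrow> real"
    and f :: "real \<Rightarrow> real"
    and K :: "(real^('n::{finite,linorder})^('n::{finite,linorder})) set"
  assumes lam_mono: "strict_mono lam"
    and f_nz: "\<And>i. f (lam i) \<noteq> 0"
    and f_abs: "\<And>i j. i \<noteq> j \<Longrightarrow> \<bar>f (lam i)\<bar> \<noteq> \<bar>f (lam j)\<bar>"
    and K_sub: "K \<subseteq> T_Lambda lam"
    and K_compact: "compact K"
    and K_nodiag: "\<And>T. T \<in> K \<Longrightarrow> \<not> is_diag_mat T"
  shows "\<exists>B::nat. B > 0 \<and> (\<forall>T \<in> T_Lambda lam.
           finite {k::nat. (qr_step f ^^ k) T \<in> K} \<and>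
           card {k::nat. (qr_step f ^^ k) T \<in> K} < B)"
proof -
  have inj: "inj lam" using lam_mono by (rule strict_mono_imp_inj_on)
  obtain p where p: "\<forall>i. poly p (lam i) = f (lam i)"
    using lagrange_interpolation_exists[OF inj, of "\<lambda>i. f (lam i)"] by blast
  define V where "V S = weighted_diag (gram (poly_mat p S))"
    for S :: "real^('n::{finite,linorder})^('n::{finite,linorder})"
  define M where "M = (\<Sum>k\<in>(UNIV::'n set). rank_weight k) * (\<Sum>j\<in>UNIV. f (lam j) ^ 2)"
  have iso: "T_Lambda lam \<subseteq> isospectral lam" by (auto simp: T_Lambda_def isospectral_def)
  obtain \<delta> where "0 < \<delta>" and gain: "\<forall>S\<in>K. V S + \<delta> \<le> V (qr_step f S)"
    using qr_step_uniform_gain[OF inj p f_nz f_abs K_compact] K_sub K_nodiag iso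
    unfolding V_def by blast
  note step = qr_step_lyapunov(1,2)[OF _ inj p f_nz, folded V_def]
  have bounds: "0 \<le> V S \<and> V S \<le> M" if "S \<in> isospectral lam" for S
    using weighted_diag_gram_poly_mat_bounds[OF that inj p] by (simp add: V_def M_def)
  have "finite {k. (qr_step f ^^ k) T \<in> K}" "card {k. (qr_step f ^^ k) T \<in> K} \<le> nat \<lfloor>M / \<delta>\<rfloor>"
    if "T \<in> T_Lambda lam" for T
    using orbit_visits_bounded_by_lyapunov[where X = "isospectral lam" and F = "qr_step f" and V = V
        and M = M and K = K and \<delta> = \<delta>, OF step(1) _ bounds step(2) _ \<open>0 < \<delta>\<close>] gain iso that
    by blast+
  then show ?thesis by (intro exI[of _ "Suc (nat \<lfloor>M / \<delta>\<rfloor>)"]) (auto simp: less_Suc_eq_le)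
qed

end
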